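(* Let $p\geq1$ and let $A$ be a complex $r$-matrix of order $n_1\times\cdots\times n_r$. (a) For every $k\in[r]$, \[ \|A\|_p\geq\frac{1}{n_1^{1/p}\cdots n_r^{1/p}}\sum_{j\in[n_k]}\big|\Sigma A^{(k)}_j\big|.\qquad( * ) \] (b) If $A$ is nonnegative, $p>1$, and equality holds in $( * )$ for all $k\in[r]$, then $A$ is regular. (c) If $p\geq r$ and $A$ is nonnegative, then equality holds in $( * )$ for all $k\in[r]$ if and only if $A$ is regular.
   Context: An $r$-matrix of order $n_1\times\cdots\times n_r$ is a function on $[n_1]\times\cdots\times[n_r]$ with values $a_{i_1,\ldots,i_r}$. For $k\in[r]$, $j\in[n_k]$, the slice $A^{(k)}_j$ is the $(r-1)$-matrix obtained by fixing $i_k=j$; $\Sigma B$ is the sum of all entries of $B$. $A$ is regular if for every $k\in[r]$, $\Sigma A^{(k)}_1=\cdots=\Sigma A^{(k)}_{n_k}$. The spectral $p$-norm is $\|A\|_p=\max\{|\sum a_{i_1,\ldots,i_r}\overline{x^{(1)}_{i_1}}\cdots\overline{x^{(r)}_{i_r}}|:\mathbf{x}^{(k)}\in\mathbb{C}^{n_k},\ |\mathbf{x}^{(k)}|_p=1\ \forall k\}$. *)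

theory Defs
  imports "HOL-Analysis.Analysis"
begin

text \<open>An r-matrix of order n_0 x ... x n_(r-1) (0-based indices): the orders are
  given by n :: nat => nat (only n k for k < r matter), index tuples are
  extensional functions i with i k < n k for k < r, and the matrix is a function
  A from index tuples to complex numbers (values outside the index set are irrelevant).\<close>

definition idx :: "nat \<Rightarrow> (nat \<Rightarrow> nat) \<Rightarrow> (nat \<Rightarrow> nat) set" where
  "idx r n = PiE {..<r} (\<lambda>k. {..<n k})"

definition slice_sum ::
  "nat \<Rightarrow> (nat \<Rightarrow> nat) \<Rightarrow> ((nat \<Rightarrow> nat) \<Rightarrow> complex) \<Rightarrow> nat \<Rightarrow> nat \<Rightarrow> complex" where
  "slice_sum r n A k j = (\<Sum>i\<in>{i\<in>idx r n. i k = j}. A i)"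

definition regular :: "nat \<Rightarrow> (nat \<Rightarrow> nat) \<Rightarrow> ((nat \<Rightarrow> nat) \<Rightarrow> complex) \<Rightarrow> bool" where
  "regular r n A \<longleftrightarrow>
     (\<forall>k<r. \<forall>j<n k. \<forall>j'<n k. slice_sum r n A k j = slice_sum r n A k j')"

definition nonneg_matrix :: "nat \<Rightarrow> (nat \<Rightarrow> nat) \<Rightarrow> ((nat \<Rightarrow> nat) \<Rightarrow> complex) \<Rightarrow> bool" where
  "nonneg_matrix r n A \<longleftrightarrow> (\<forall>i\<in>idx r n. Im (A i) = 0 \<and> Re (A i) \<ge> 0)"

definition vec_pnorm :: "real \<Rightarrow> nat \<Rightarrow> (nat \<Rightarrow> complex) \<Rightarrow> real" where
  "vec_pnorm p m x = (\<Sum>j<m. cmod (x j) powr p) powr (1 / p)"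

definition mform ::
  "nat \<Rightarrow> (nat \<Rightarrow> nat) \<Rightarrow> ((nat \<Rightarrow> nat) \<Rightarrow> complex) \<Rightarrow> (nat \<Rightarrow> nat \<Rightarrow> complex) \<Rightarrow> complex" where
  "mform r n A x = (\<Sum>i\<in>idx r n. A i * (\<Prod>k<r. cnj (x k (i k))))"

text \<open>Spectral p-norm (the maximum is attained by compactness, so it equals the supremum).\<close>
definition spec_pnorm :: "real \<Rightarrow> nat \<Rightarrow> (nat \<Rightarrow> nat) \<Rightarrow> ((nat \<Rightarrow> nat) \<Rightarrow> complex) \<Rightarrow> real" where
  "spec_pnorm p r n A =
     Sup {cmod (mform r n A x) | x. \<forall>k<r. vec_pnorm p (n k) (x k) = 1}"

end

theory Submission
  imports Defs
begin

text \<open>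
  On vectors that are flat (all entries n_m^(-1/p)) in every coordinate except k, the
  multilinear form equals n_k^(1/p) / (\<Prod>m. n_m^(1/p)) times the pairing of the k-th
  vector with the slice sums s_j; the flat vector phase-aligned with s gives (a).
  For nonnegative A the flat vector maximises this pairing over the unit p-sphere only if
  s is constant (picking the largest entry when p = 1, strict convexity of t^q for the
  conjugate exponent q when p > 1), which gives (b).
  For (c), weighted AM-GM with weights 1/p, and 1 - r/p \<ge> 0 on the value 1, bounds
  \<Prod>k. |x_k(i_k)| by an affine combination of the n_k |x_k(i_k)|^p; summed against a
  regular nonnegative A every coordinate contributes the same, and the bound becomes
  \<Sigma>A / (\<Prod>m. n_m^(1/p)), which is the value from (a).
\<close>

section \<open>Slice sums\<close>

lemma finite_idx: "finite (idx r n)"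
  by (simp add: idx_def finite_PiE)

lemma idx_less: "i \<in> idx r n \<Longrightarrow> k < r \<Longrightarrow> i k < n k"
  by (auto simp: idx_def PiE_def)

lemma sum_idx_by_coord:
  fixes g :: "(nat \<Rightarrow> nat) \<Rightarrow> 'a::comm_semiring_1"
  assumes "k < r"
  shows "(\<Sum>i\<in>idx r n. g i * h (i k)) = (\<Sum>j<n k. h j * (\<Sum>i\<in>{i\<in>idx r n. i k = j}. g i))"
proof -
  have "(\<Sum>i\<in>idx r n. g i * h (i k)) = (\<Sum>j<n k. \<Sum>i\<in>{i\<in>idx r n. i k = j}. g i * h (i k))"
    by (rule sum.group[symmetric]) (use finite_idx idx_less assms in auto)
  also have "\<dots> = (\<Sum>j<n k. h j * (\<Sum>i\<in>{i\<in>idx r n. i k = j}. g i))"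
    by (auto simp: sum_distrib_left mult.commute intro!: sum.cong)
  finally show ?thesis .
qed

lemma sum_idx_by_coord_const:
  fixes g :: "(nat \<Rightarrow> nat) \<Rightarrow> 'a::comm_semiring_1"
  assumes "k < r" and "\<And>j. j < n k \<Longrightarrow> (\<Sum>i\<in>{i\<in>idx r n. i k = j}. g i) = c"
  shows "(\<Sum>i\<in>idx r n. g i * h (i k)) = c * (\<Sum>j<n k. h j)"
  using assms by (simp add: sum_idx_by_coord sum_distrib_left mult.commute)

lemma sum_slice_sum:
  assumes "k < r"
  shows "(\<Sum>j<n k. slice_sum r n A k j) = (\<Sum>i\<in>idx r n. A i)"
  using sum_idx_by_coord[OF assms, of A "\<lambda>_. 1" n] by (simp add: slice_sum_def)

lemma nonneg_matrix_slice_sum: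
  assumes "nonneg_matrix r n A"
  shows "Im (slice_sum r n A k j) = 0" "Re (slice_sum r n A k j) \<ge> 0"
  using assms by (auto simp: slice_sum_def nonneg_matrix_def intro!: sum_nonneg sum.neutral)

lemma nonneg_matrix_norm_slice_sum:
  "nonneg_matrix r n A \<Longrightarrow> cmod (slice_sum r n A k j) = Re (slice_sum r n A k j)"
  using nonneg_matrix_slice_sum by (simp add: cmod_eq_Re)

lemma nonneg_matrix_sum_norm_slice_sum:
  assumes "nonneg_matrix r n A" "k < r"
  shows "(\<Sum>j<n k. cmod (slice_sum r n A k j)) = (\<Sum>i\<in>idx r n. Re (A i))"
  using sum_slice_sum[OF assms(2), of n A]
  by (simp add: nonneg_matrix_norm_slice_sum[OF assms(1)] flip: Re_sum)

section \<open>The spectral p-norm and flat test vectors\<close>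

lemma powr_inverse_eq_1_iff:
  fixes S p :: real
  assumes "S \<ge> 0" "p > 0"
  shows "S powr (1/p) = 1 \<longleftrightarrow> S = 1"
proof
  assume "S powr (1/p) = 1"
  then have "(S powr (1/p)) powr p = 1" by simp
  then show "S = 1" using assms by (simp add: powr_powr)
qed simp

lemma vec_pnorm_eq_1_iff:
  assumes "p > 0"
  shows "vec_pnorm p N v = 1 \<longleftrightarrow> (\<Sum>j<N. cmod (v j) powr p) = 1"
  unfolding vec_pnorm_def by (rule powr_inverse_eq_1_iff) (use assms in \<open>auto intro: sum_nonneg\<close>)

lemma vec_pnorm_eq_1_norm_le:
  assumes "p > 0" "vec_pnorm p N v = 1" "j < N"
  shows "cmod (v j) \<le> 1"
proof -
  have "cmod (v j) powr p \<le> (\<Sum>j<N. cmod (v j) powr p)"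
    by (rule member_le_sum) (use assms in auto)
  then have "cmod (v j) powr p \<le> 1 powr p"
    using assms vec_pnorm_eq_1_iff by simp
  then show ?thesis
    using assms(1) by (meson norm_ge_zero not_le powr_less_mono2 zero_le_one)
qed

lemma vec_pnorm_const_norm:
  assumes "N \<ge> 1" "p > 0" "\<And>j. cmod (v j) = real N powr (-1/p)"
  shows "vec_pnorm p N v = 1"
proof -
  have "cmod (v j) powr p = 1 / real N" for j
  proof -
    have "cmod (v j) powr p = real N powr (-1/p * p)"
      by (simp only: assms(3) powr_powr)
    then show ?thesis using assms by (simp add: powr_minus_divide)
  qed
  then show ?thesis
    using assms by (simp add: vec_pnorm_eq_1_iff)
qed

lemma norm_mform_le:
  "cmod (mform r n A x) \<le> (\<Sum>i\<in>idx r n. cmod (A i) * (\<Prod>k<r. cmod (x k (i k))))"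
  unfolding mform_def
  by (rule order_trans[OF norm_sum]) (simp add: norm_mult prod_norm[symmetric])

lemma norm_mform_le_sum_norm:
  assumes "p > 0" "\<forall>k<r. vec_pnorm p (n k) (x k) = 1"
  shows "cmod (mform r n A x) \<le> (\<Sum>i\<in>idx r n. cmod (A i))"
proof (rule order_trans[OF norm_mform_le], rule sum_mono)
  fix i assume "i \<in> idx r n"
  then have "(\<Prod>k<r. cmod (x k (i k))) \<le> 1"
    by (intro prod_le_1) (use assms idx_less vec_pnorm_eq_1_norm_le in auto)
  then show "cmod (A i) * (\<Prod>k<r. cmod (x k (i k))) \<le> cmod (A i)"
    by (simp add: mult_left_le)
qed

definition flat_vec :: "real \<Rightarrow> nat \<Rightarrow> nat \<Rightarrow> complex" where
  "flat_vec p N = (\<lambda>_. of_real (real N powr (-1/p)))"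

lemma vec_pnorm_flat_vec: "N \<ge> 1 \<Longrightarrow> p > 0 \<Longrightarrow> vec_pnorm p N (flat_vec p N) = 1"
  by (rule vec_pnorm_const_norm) (auto simp: flat_vec_def)

lemma norm_mform_le_spec_pnorm:
  assumes "p > 0" "\<forall>k<r. vec_pnorm p (n k) (x k) = 1"
  shows "cmod (mform r n A x) \<le> spec_pnorm p r n A"
  unfolding spec_pnorm_def
proof (rule cSup_upper)
  show "cmod (mform r n A x) \<in> {cmod (mform r n A x) |x. \<forall>k<r. vec_pnorm p (n k) (x k) = 1}"
    using assms by blast
  show "bdd_above {cmod (mform r n A x) |x. \<forall>k<r. vec_pnorm p (n k) (x k) = 1}"
    by (rule bdd_aboveI[of _ "\<Sum>i\<in>idx r n. cmod (A i)"]) (use assms norm_mform_le_sum_norm in auto)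
qed

lemma spec_pnorm_le:
  assumes "p > 0" "\<forall>k<r. n k \<ge> 1"
    and "\<And>x. \<forall>k<r. vec_pnorm p (n k) (x k) = 1 \<Longrightarrow> cmod (mform r n A x) \<le> B"
  shows "spec_pnorm p r n A \<le> B"
  unfolding spec_pnorm_def
proof (rule cSup_least)
  let ?flat = "\<lambda>k. flat_vec p (n k)"
  have "\<forall>k<r. vec_pnorm p (n k) (?flat k) = 1"
    using assms vec_pnorm_flat_vec by auto
  then have "cmod (mform r n A ?flat) \<in> {cmod (mform r n A x) |x. \<forall>k<r. vec_pnorm p (n k) (x k) = 1}"
    by (intro CollectI exI[of _ ?flat] conjI refl)
  then show "{cmod (mform r n A x) |x. \<forall>k<r. vec_pnorm p (n k) (x k) = 1} \<noteq> {}"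
    by (metis empty_iff)
qed (use assms in auto)

lemma prod_powr_remove:
  fixes p :: real and n :: "nat \<Rightarrow> nat"
  assumes "k < r" "\<forall>m<r. n m \<ge> 1"
  shows "(\<Prod>m\<in>{..<r}-{k}. real (n m) powr (-1/p)) =
    real (n k) powr (1/p) / (\<Prod>m<r. real (n m) powr (1/p))"
proof -
  have "(\<Prod>m<r. real (n m) powr (1/p)) =
      real (n k) powr (1/p) * (\<Prod>m\<in>{..<r}-{k}. real (n m) powr (1/p))"
    by (rule prod.remove) (use assms in auto)
  moreover have "(\<Prod>m\<in>{..<r}-{k}. real (n m) powr (-1/p)) =
      1 / (\<Prod>m\<in>{..<r}-{k}. real (n m) powr (1/p))"
    by (simp add: powr_minus_divide prod_dividef)
  moreover have "real (n k) powr (1/p) > 0"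
    using assms by auto
  ultimately show ?thesis
    by simp
qed

lemma mform_flat_upd:
  assumes "k < r" "\<forall>m<r. n m \<ge> 1"
  shows "mform r n A ((\<lambda>m. flat_vec p (n m))(k := v)) =
    of_real (real (n k) powr (1/p) / (\<Prod>m<r. real (n m) powr (1/p))) *
    (\<Sum>j<n k. cnj (v j) * slice_sum r n A k j)"
proof -
  define c where "c = (\<Prod>m\<in>{..<r}-{k}. real (n m) powr (-1/p))"
  have c: "c = real (n k) powr (1/p) / (\<Prod>m<r. real (n m) powr (1/p))"
    unfolding c_def by (rule prod_powr_remove[OF assms])
  have "(\<Prod>m<r. cnj (((\<lambda>m. flat_vec p (n m))(k := v)) m (i m))) = cnj (v (i k)) * of_real c"
    for i
  proof -
    have "(\<Prod>m<r. cnj (((\<lambda>m. flat_vec p (n m))(k := v)) m (i m))) =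
        cnj (v (i k)) * (\<Prod>m\<in>{..<r}-{k}. cnj (flat_vec p (n m) (i m)))"
      using assms by (subst prod.remove[of _ k]) auto
    then show ?thesis by (simp add: c_def flat_vec_def)
  qed
  then have "mform r n A ((\<lambda>m. flat_vec p (n m))(k := v)) =
      (\<Sum>i\<in>idx r n. A i * (of_real c * cnj (v (i k))))"
    unfolding mform_def by (simp add: mult_ac)
  also have "\<dots> = (\<Sum>j<n k. (of_real c * cnj (v j)) * slice_sum r n A k j)"
    unfolding slice_sum_def by (rule sum_idx_by_coord[OF assms(1)])
  also have "\<dots> = of_real c * (\<Sum>j<n k. cnj (v j) * slice_sum r n A k j)"
    by (simp add: sum_distrib_left mult.assoc)
  finally show ?thesis
    by (simp only: c)
qed


lemma spec_pnorm_ge_slice_pairing: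
  assumes "p > 0" "\<forall>m<r. n m \<ge> 1" "k < r" "vec_pnorm p (n k) v = 1"
  shows "real (n k) powr (1/p) * cmod (\<Sum>j<n k. cnj (v j) * slice_sum r n A k j) /
    (\<Prod>m<r. real (n m) powr (1/p)) \<le> spec_pnorm p r n A"
proof -
  have "\<forall>m<r. vec_pnorm p (n m) (((\<lambda>m. flat_vec p (n m))(k := v)) m) = 1"
    using assms vec_pnorm_flat_vec by auto
  then have "cmod (mform r n A ((\<lambda>m. flat_vec p (n m))(k := v))) \<le> spec_pnorm p r n A"
    by (rule norm_mform_le_spec_pnorm[OF assms(1)])
  then show ?thesis
    unfolding mform_flat_upd[OF assms(3,2)] norm_mult norm_of_real
    by (simp add: abs_of_nonneg prod_nonneg)
qed

lemma cnj_sgn_mult: "cnj (sgn s) * s = of_real (cmod s)"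
proof (cases "s = 0")
  case False
  then show ?thesis
    by (simp add: sgn_eq complex_norm_square[symmetric] power2_eq_square field_simps)
qed simp

lemma spec_pnorm_ge_sum_norm_slice_sum:
  assumes "p > 0" "\<forall>m<r. n m \<ge> 1" "k < r"
  shows "(\<Sum>j<n k. cmod (slice_sum r n A k j)) / (\<Prod>m<r. real (n m) powr (1/p)) \<le>
    spec_pnorm p r n A"
proof -
  define s where "s = slice_sum r n A k"
  define c where "c = real (n k) powr (-1/p)"
  define v where "v = (\<lambda>j. of_real c * (if s j = 0 then 1 else sgn (s j)))"
  have "vec_pnorm p (n k) v = 1"
    using assms by (intro vec_pnorm_const_norm) (auto simp: v_def c_def norm_mult norm_sgn)
  then have "real (n k) powr (1/p) * cmod (\<Sum>j<n k. cnj (v j) * s j) /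
      (\<Prod>m<r. real (n m) powr (1/p)) \<le> spec_pnorm p r n A"
    unfolding s_def by (rule spec_pnorm_ge_slice_pairing[OF assms])
  moreover have "real (n k) powr (1/p) * cmod (\<Sum>j<n k. cnj (v j) * s j) = (\<Sum>j<n k. cmod (s j))"
  proof -
    have "(\<Sum>j<n k. cnj (v j) * s j) = of_real (c * (\<Sum>j<n k. cmod (s j)))"
      by (auto simp: sum_distrib_left v_def cnj_sgn_mult mult.assoc intro!: sum.cong)
    then have "cmod (\<Sum>j<n k. cnj (v j) * s j) = c * (\<Sum>j<n k. cmod (s j))"
      by (simp only: norm_of_real) (simp add: c_def sum_nonneg)
    moreover have "real (n k) powr (1/p) > 0"
      using assms by auto
    ultimately show ?thesis
      by (simp add: c_def powr_minus)
  qed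
  ultimately show ?thesis
    unfolding s_def by simp
qed

section \<open>The equality case\<close>

lemma powr_gt_tangent_at_1:
  fixes u q :: real
  assumes "u \<ge> 0" "u \<noteq> 1" "q > 1"
  shows "1 + q * (u - 1) < u powr q"
proof (cases "u = 0")
  case False
  then have u0: "u > 0" using assms by simp
  define h where "h = (\<lambda>x::real. x powr q - q * x)"
  have der: "DERIV h x :> q * x powr (q - 1) - q" if "x > 0" for x
    unfolding h_def using that by (auto intro!: derivative_eq_intros)
  have cont: "continuous_on {a..b} h" if "a > 0" for a b
    unfolding h_def using that by (auto intro!: continuous_intros)
  consider "u < 1" | "1 < u" using assms by linarith
  then have "h 1 < h u"
  proof cases
    case 1
    show ?thesis
    proof (rule DERIV_neg_imp_decreasing_open[OF 1 _ cont[OF u0]])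
      fix x assume x: "u < x" "x < 1"
      then have "x powr (q - 1) < 1 powr (q - 1)"
        using u0 assms by (intro powr_less_mono2) auto
      then show "\<exists>y. DERIV h x :> y \<and> y < 0"
        using der[of x] x u0 assms by (intro exI[of _ "q * x powr (q - 1) - q"]) auto
    qed
  next
    case 2
    show ?thesis
    proof (rule DERIV_pos_imp_increasing_open[OF 2 _ cont])
      fix x assume x: "1 < x" "x < u"
      then have "1 powr (q - 1) < x powr (q - 1)"
        using assms by (intro powr_less_mono2) auto
      then show "\<exists>y. DERIV h x :> y \<and> y > 0"
        using der[of x] x assms by (intro exI[of _ "q * x powr (q - 1) - q"]) auto
    qed simp
  qed
  then show ?thesis unfolding h_def by (simp add: algebra_simps)
qed (use assms in simp)

lemma sum_powr_gt_card:
  fixes u :: "nat \<Rightarrow> real"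
  assumes q: "q > 1" and u0: "\<forall>j<N. u j \<ge> 0" and sum_u: "(\<Sum>j<N. u j) = real N"
    and ab: "a < N" "b < N" "u a \<noteq> u b"
  shows "real N < (\<Sum>j<N. u j powr q)"
proof -
  obtain c where c: "c < N" "u c \<noteq> 1"
    using ab by metis
  have "(\<Sum>j<N. 1 + q * (u j - 1)) < (\<Sum>j<N. u j powr q)"
  proof (rule sum_strict_mono_ex1)
    show "\<forall>j\<in>{..<N}. 1 + q * (u j - 1) \<le> u j powr q"
      using u0 q powr_gt_tangent_at_1 by (fastforce simp: order_le_less)
    show "\<exists>j\<in>{..<N}. 1 + q * (u j - 1) < u j powr q"
      using c u0 q powr_gt_tangent_at_1 by auto
  qed simp
  moreover have "(\<Sum>j<N. 1 + q * (u j - 1)) = real N"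
    using sum_u by (simp add: sum.distrib sum_distrib_left[symmetric] sum_subtractf algebra_simps)
  ultimately show ?thesis by simp
qed

lemma flat_vector_not_maximizing_1:
  fixes \<sigma> :: "nat \<Rightarrow> real"
  assumes "a < N" "b < N" "\<sigma> a \<noteq> \<sigma> b"
  shows "\<exists>w. (\<Sum>j<N. \<bar>w j\<bar> powr 1) = 1 \<and> (\<Sum>j<N. \<sigma> j) * real N powr (-1/1) < (\<Sum>j<N. \<sigma> j * w j)"
proof -
  obtain m where m: "m < N" "\<And>j. j < N \<Longrightarrow> \<sigma> j \<le> \<sigma> m"
    using Max_in[of "\<sigma> ` {..<N}"] Max_ge[of "\<sigma> ` {..<N}"] assms by fastforce
  obtain c where c: "c < N" "\<sigma> c < \<sigma> m"
    using m assms by (metis order_le_imp_less_or_eq)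
  define w where "w = (\<lambda>j. if j = m then (1::real) else 0)"
  have "(\<Sum>j<N. \<bar>w j\<bar> powr 1) = (\<Sum>j<N. w j)"
    by (intro sum.cong) (auto simp: w_def)
  then have "(\<Sum>j<N. \<bar>w j\<bar> powr 1) = 1" "(\<Sum>j<N. \<sigma> j * w j) = \<sigma> m"
    using m by (simp_all add: w_def if_distrib cong: if_cong)
  moreover have "(\<Sum>j<N. \<sigma> j) < (\<Sum>j<N. \<sigma> m)"
    by (rule sum_strict_mono_ex1) (use m c in auto)
  ultimately show ?thesis
    using assms by (intro exI[of _ w]) (auto simp: powr_minus_divide field_simps)
qed

lemma flat_vector_not_maximizing_gt_1:
  fixes \<sigma> :: "nat \<Rightarrow> real" and p :: real
  assumes p: "p > 1" and \<sigma>0: "\<forall>j<N. \<sigma> j \<ge> 0" and ab: "a < N" "b < N" "\<sigma> a \<noteq> \<sigma> b"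
  shows "\<exists>w. (\<Sum>j<N. \<bar>w j\<bar> powr p) = 1 \<and> (\<Sum>j<N. \<sigma> j) * real N powr (-1/p) < (\<Sum>j<N. \<sigma> j * w j)"
proof -
  define \<mu> where "\<mu> = (\<Sum>j<N. \<sigma> j) / real N"
  have "0 \<le> \<sigma> a" "0 \<le> \<sigma> b"
    using ab \<sigma>0 by auto
  then have "0 < \<sigma> a \<or> 0 < \<sigma> b"
    using ab by linarith
  then have S0: "0 < (\<Sum>j<N. \<sigma> j)"
    using ab \<sigma>0 by (auto intro: sum_pos2)
  then have \<mu>0: "\<mu> > 0"
    using ab by (simp add: \<mu>_def)
  define u where "u = (\<lambda>j. \<sigma> j / \<mu>)"
  have u0: "\<forall>j<N. u j \<ge> 0"
    using \<sigma>0 \<mu>0 by (simp add: u_def)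
  define q where "q = p / (p - 1)"
  have q: "q > 1" "(q - 1) * p = q"
    using p by (simp_all add: q_def field_simps)
  define Y where "Y = (\<Sum>j<N. u j powr q)"
  have YN: "real N < Y"
    unfolding Y_def
  proof (rule sum_powr_gt_card[OF q(1) u0 _ ab(1,2)])
    have "(\<Sum>j<N. u j) = (\<Sum>j<N. \<sigma> j) / \<mu>"
      by (simp add: u_def sum_divide_distrib)
    then show "(\<Sum>j<N. u j) = real N"
      using S0 by (simp add: \<mu>_def)
    show "u a \<noteq> u b"
      using ab \<mu>0 by (simp add: u_def)
  qed
  then have Y0: "Y > 0" by linarith
  \<comment> \<open>the extremal vector of Hoelder's inequality against \<open>\<sigma>\<close>, with \<open>q\<close> the conjugate exponent\<close>
  define w where "w = (\<lambda>j. u j powr (q - 1) / Y powr (1/p))"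
  have "\<bar>w j\<bar> powr p = u j powr q / Y" for j
    using Y0 p by (simp add: w_def powr_divide powr_powr q(2))
  then have "(\<Sum>j<N. \<bar>w j\<bar> powr p) = 1"
    using Y0 by (simp add: Y_def flip: sum_divide_distrib)
  moreover have "\<sigma> j * w j = \<mu> * u j powr q / Y powr (1/p)" if "j < N" for j
  proof -
    have "u j * u j powr (q - 1) = u j powr q"
      using u0 that q by (cases "u j = 0") (auto simp: powr_mult_base)
    moreover have "\<sigma> j = \<mu> * u j"
      using \<mu>0 by (simp add: u_def)
    ultimately show ?thesis
      by (simp add: w_def)
  qed
  then have "(\<Sum>j<N. \<sigma> j * w j) = \<mu> * Y powr (1 - 1/p)"
    using Y0 by (simp add: Y_def powr_diff sum_distrib_left flip: sum_divide_distrib)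
  moreover have "(\<Sum>j<N. \<sigma> j) * real N powr (-1/p) = \<mu> * real N powr (1 - 1/p)"
    using ab by (simp add: \<mu>_def powr_diff powr_minus_divide)
  moreover have "real N powr (1 - 1/p) < Y powr (1 - 1/p)"
    using YN p by (intro powr_less_mono2) auto
  ultimately show ?thesis
    using \<mu>0 by (intro exI[of _ w]) simp
qed

lemma flat_vector_not_maximizing:
  fixes \<sigma> :: "nat \<Rightarrow> real" and p :: real
  assumes "p \<ge> 1" "\<forall>j<N. \<sigma> j \<ge> 0" "a < N" "b < N" "\<sigma> a \<noteq> \<sigma> b"
  shows "\<exists>w. (\<Sum>j<N. \<bar>w j\<bar> powr p) = 1 \<and> (\<Sum>j<N. \<sigma> j) * real N powr (-1/p) < (\<Sum>j<N. \<sigma> j * w j)"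
  using assms flat_vector_not_maximizing_1[of a N b \<sigma>] flat_vector_not_maximizing_gt_1[of p N \<sigma> a b]
  by (cases "p = 1") auto

lemma slice_sum_eq_if_spec_pnorm_eq:
  assumes p: "p \<ge> 1" and n_pos: "\<forall>m<r. n m \<ge> 1" and k: "k < r" and nn: "nonneg_matrix r n A"
    and eq: "spec_pnorm p r n A =
      (\<Sum>j<n k. cmod (slice_sum r n A k j)) / (\<Prod>m<r. real (n m) powr (1/p))"
    and j: "j < n k" "j' < n k"
  shows "slice_sum r n A k j = slice_sum r n A k j'"
proof (rule ccontr)
  assume ne: "slice_sum r n A k j \<noteq> slice_sum r n A k j'"
  define \<sigma> where "\<sigma> = (\<lambda>j. Re (slice_sum r n A k j))"
  define C where "C = (\<Prod>m<r. real (n m) powr (1/p))"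
  have s: "slice_sum r n A k j = of_real (\<sigma> j)" for j
    using nonneg_matrix_slice_sum[OF nn] by (simp add: \<sigma>_def complex_eq_iff)
  have \<sigma>0: "\<forall>j<n k. \<sigma> j \<ge> 0"
    using nonneg_matrix_slice_sum[OF nn] by (simp add: \<sigma>_def)
  obtain w where w: "(\<Sum>j<n k. \<bar>w j\<bar> powr p) = 1"
    and w_gt: "(\<Sum>j<n k. \<sigma> j) * real (n k) powr (-1/p) < (\<Sum>j<n k. \<sigma> j * w j)"
    using flat_vector_not_maximizing[OF p \<sigma>0 j] ne by (auto simp: s)
  have v: "vec_pnorm p (n k) (\<lambda>j. of_real (w j)) = 1"
    using w p by (simp add: vec_pnorm_eq_1_iff)
  have "real (n k) powr (1/p) * cmod (\<Sum>j<n k. of_real (w j) * of_real (\<sigma> j)) / C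
      \<le> spec_pnorm p r n A"
    using spec_pnorm_ge_slice_pairing[OF _ n_pos k v, of A] p by (simp add: s C_def)
  moreover have "(\<Sum>j<n k. \<sigma> j) / C <
      real (n k) powr (1/p) * cmod (\<Sum>j<n k. of_real (w j) * of_real (\<sigma> j)) / C"
  proof -
    have pos: "0 < real (n k) powr (1/p)" "0 < C"
      using n_pos k by (auto simp: C_def intro!: prod_pos)
    have "(\<Sum>j<n k. \<sigma> j) = (\<Sum>j<n k. \<sigma> j) * real (n k) powr (-1/p) * real (n k) powr (1/p)"
      using pos by (simp add: powr_minus)
    also have "\<dots> < (\<Sum>j<n k. \<sigma> j * w j) * real (n k) powr (1/p)"
      using w_gt pos by simp
    also have "\<dots> \<le> real (n k) powr (1/p) * cmod (\<Sum>j<n k. of_real (w j) * of_real (\<sigma> j))"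
      using pos by (simp flip: of_real_mult of_real_sum add: mult.commute)
    finally show ?thesis
      using pos by (simp add: divide_strict_right_mono)
  qed
  moreover have "spec_pnorm p r n A = (\<Sum>j<n k. \<sigma> j) / C"
    using eq \<sigma>0 by (simp add: s C_def)
  ultimately show False by linarith
qed

section \<open>Regular matrices attain the bound\<close>

lemma weighted_geometric_mean_le_arithmetic_mean:
  fixes w y :: "'a \<Rightarrow> real"
  assumes S: "finite S" and w: "\<And>i. i \<in> S \<Longrightarrow> w i \<ge> 0" "sum w S = 1"
    and y: "\<And>i. i \<in> S \<Longrightarrow> y i > 0"
  shows "(\<Prod>i\<in>S. y i powr w i) \<le> (\<Sum>i\<in>S. w i * y i)"
proof -
  obtain j where j: "j \<in> S" "w j \<noteq> 0"
    using w(2) sum.neutral[of S w] by (metis zero_neq_one)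
  have "0 < w j"
    using j w(1) by (metis order_le_less)
  then have "0 < w j * y j"
    using j(1) y by simp
  moreover have "0 \<le> w i * y i" if "i \<in> S" for i
    using that w(1) y by (simp add: less_imp_le)
  ultimately have "0 < (\<Sum>i\<in>S. w i * y i)"
    by (rule sum_pos2[OF S j(1)])
  moreover have "(\<Sum>i\<in>S. w i * ln (y i)) \<le> ln (\<Sum>i\<in>S. w i * y i)"
    using concave_on_sum[OF S _ ln_concave, of w y] j w y by auto
  ultimately have "exp (\<Sum>i\<in>S. w i * ln (y i)) \<le> (\<Sum>i\<in>S. w i * y i)"
    by (simp add: ln_ge_iff)
  moreover have "exp (\<Sum>i\<in>S. w i * ln (y i)) = (\<Prod>i\<in>S. y i powr w i)"
    using y by (auto simp: exp_sum[OF S] powr_def mult.commute less_imp_neq[symmetric] intro!: prod.cong)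
  ultimately show ?thesis by simp
qed

lemma prod_powr_mult_le_mean:
  fixes c t :: "nat \<Rightarrow> real" and p :: real
  assumes p: "p \<ge> 1" "real r \<le> p" and c: "\<forall>k<r. c k \<ge> 0" and t: "\<forall>k<r. t k \<ge> 0"
  shows "(\<Prod>k<r. c k powr (1/p) * t k) \<le> (\<Sum>k<r. c k * t k powr p) / p + (1 - real r / p)"
proof -
  define z where "z = (\<lambda>k. c k * t k powr p)"
  have z: "c k powr (1/p) * t k = z k powr (1/p)" if "k < r" for k
    using c t that p by (simp add: z_def powr_mult powr_powr)
  show ?thesis
  proof (cases "\<exists>k<r. z k = 0")
    case True
    then have "(\<Prod>k<r. c k powr (1/p) * t k) = 0"
      using z by force
    moreover have "0 \<le> (\<Sum>k<r. c k * t k powr p) / p" "real r / p \<le> 1"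
      using c p by (auto intro!: sum_nonneg divide_nonneg_pos)
    ultimately show ?thesis by linarith
  next
    case False
    \<comment> \<open>AM-GM for the values z k with weight 1/p each, padded with the value 1 of weight 1 - r/p\<close>
    define w where "w = (\<lambda>k. if k < r then 1/p else 1 - real r / p)"
    define y where "y = (\<lambda>k. if k < r then z k else 1)"
    have "(\<Prod>k<Suc r. y k powr w k) \<le> (\<Sum>k<Suc r. w k * y k)"
    proof (rule weighted_geometric_mean_le_arithmetic_mean)
      show "w k \<ge> 0" if "k \<in> {..<Suc r}" for k
        using p by (auto simp: w_def)
      show "sum w {..<Suc r} = 1"
        using p by (simp add: w_def)
      show "y k > 0" if "k \<in> {..<Suc r}" for k
        using False c t that by (auto simp: y_def z_def order_le_less)
    qed simp
    then show ?thesis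
      by (simp add: y_def w_def z z_def sum_divide_distrib)
  qed
qed

lemma regular_fiber_sum_Re:
  assumes "regular r n A" "k < r" "j < n k"
  shows "(\<Sum>i\<in>{i\<in>idx r n. i k = j}. Re (A i)) = Re (slice_sum r n A k 0)"
proof -
  have "slice_sum r n A k j = slice_sum r n A k 0"
    using assms unfolding regular_def by (metis gr_zeroI not_less_zero)
  then have "Re (slice_sum r n A k j) = Re (slice_sum r n A k 0)"
    by simp
  then show ?thesis
    by (simp add: slice_sum_def)
qed

lemma norm_mform_le_if_regular:
  assumes p: "p \<ge> 1" "real r \<le> p" and n_pos: "\<forall>k<r. n k \<ge> 1"
    and nn: "nonneg_matrix r n A" and reg: "regular r n A"
    and x: "\<forall>k<r. vec_pnorm p (n k) (x k) = 1"
  shows "cmod (mform r n A x) \<le> (\<Sum>i\<in>idx r n. Re (A i)) / (\<Prod>k<r. real (n k) powr (1/p))"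
proof -
  define C where "C = (\<Prod>k<r. real (n k) powr (1/p))"
  define T where "T = (\<Sum>i\<in>idx r n. Re (A i))"
  define t where "t = (\<lambda>k j. cmod (x k j))"
  define B where "B = (\<lambda>i. (\<Sum>k<r. real (n k) * t k (i k) powr p) / p + (1 - real r / p))"
  have C0: "C > 0"
    unfolding C_def using n_pos by (auto intro!: prod_pos)
  have A: "cmod (A i) = Re (A i)" "Re (A i) \<ge> 0" if "i \<in> idx r n" for i
    using nn that by (auto simp: nonneg_matrix_def cmod_eq_Re)
  have "cmod (mform r n A x) \<le> (\<Sum>i\<in>idx r n. Re (A i) * (\<Prod>k<r. t k (i k)))"
    using norm_mform_le[of r n A x] by (simp add: A t_def)
  also have "\<dots> \<le> (\<Sum>i\<in>idx r n. Re (A i) * (B i / C))"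
  proof (intro sum_mono mult_left_mono)
    fix i
    have "(\<Prod>k<r. t k (i k)) * C = (\<Prod>k<r. real (n k) powr (1/p) * t k (i k))"
      by (simp add: C_def prod.distrib mult.commute)
    also have "\<dots> \<le> B i"
      unfolding B_def using p by (intro prod_powr_mult_le_mean) (auto simp: t_def)
    finally show "(\<Prod>k<r. t k (i k)) \<le> B i / C"
      using C0 by (simp add: pos_le_divide_eq)
  qed (use A in auto)
  also have "\<dots> = T / C"
  proof -
    \<comment> \<open>by regularity every coordinate k contributes T / p\<close>
    have coord: "(\<Sum>i\<in>idx r n. Re (A i) * t k (i k) powr p) = T / real (n k)" if k: "k < r" for k
    proof -
      have "T = Re (slice_sum r n A k 0) * real (n k)"
        using sum_idx_by_coord_const[OF k regular_fiber_sum_Re[OF reg k], of "\<lambda>_. 1"]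
        by (simp add: T_def)
      moreover have "(\<Sum>j<n k. t k j powr p) = 1"
        using x k p by (simp add: t_def vec_pnorm_eq_1_iff)
      moreover have "real (n k) > 0"
        using n_pos k by auto
      ultimately show ?thesis
        using sum_idx_by_coord_const[OF k regular_fiber_sum_Re[OF reg k], of "\<lambda>j. t k j powr p"]
        by simp
    qed
    have "(\<Sum>i\<in>idx r n. Re (A i) * B i) =
        (\<Sum>k<r. real (n k) / p * (\<Sum>i\<in>idx r n. Re (A i) * t k (i k) powr p)) + (1 - real r / p) * T"
      by (simp add: B_def T_def algebra_simps sum.distrib sum_subtractf sum_distrib_left
          sum_divide_distrib sum.swap[of _ "idx r n"])
    also have "\<dots> = (\<Sum>k<r. T / p) + (1 - real r / p) * T"
      using n_pos by (intro arg_cong2[where f="(+)"] sum.cong) (auto simp: coord)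
    also have "\<dots> = T"
      using p by (simp add: field_simps)
    finally show ?thesis
      by (simp add: flip: sum_divide_distrib)
  qed
  finally show ?thesis
    by (simp add: C_def T_def)
qed

lemma spec_pnorm_eq_if_regular:
  assumes p: "p \<ge> 1" "real r \<le> p" and n_pos: "\<forall>m<r. n m \<ge> 1" and k: "k < r"
    and nn: "nonneg_matrix r n A" and reg: "regular r n A"
  shows "spec_pnorm p r n A =
    (\<Sum>j<n k. cmod (slice_sum r n A k j)) / (\<Prod>m<r. real (n m) powr (1/p))"
proof (rule order_antisym)
  show "spec_pnorm p r n A \<le> (\<Sum>j<n k. cmod (slice_sum r n A k j)) / (\<Prod>m<r. real (n m) powr (1/p))"
    unfolding nonneg_matrix_sum_norm_slice_sum[OF nn k]
    using p n_pos by (intro spec_pnorm_le norm_mform_le_if_regular[OF p n_pos nn reg]) auto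
  show "(\<Sum>j<n k. cmod (slice_sum r n A k j)) / (\<Prod>m<r. real (n m) powr (1/p)) \<le> spec_pnorm p r n A"
    using p n_pos k by (intro spec_pnorm_ge_sum_norm_slice_sum) auto
qed

theorem theorem21:
  fixes p :: real and r :: nat and n :: "nat \<Rightarrow> nat" and A :: "(nat \<Rightarrow> nat) \<Rightarrow> complex"
  assumes p: "p \<ge> 1"
    and n_pos: "\<forall>k<r. n k \<ge> 1"
  shows
    "(\<forall>k<r. spec_pnorm p r n A \<ge>
        (\<Sum>j<n k. cmod (slice_sum r n A k j)) / (\<Prod>k'<r. real (n k') powr (1 / p)))
     \<and>
     ((nonneg_matrix r n A \<and> p > 1 \<and>
       (\<forall>k<r. spec_pnorm p r n A =
          (\<Sum>j<n k. cmod (slice_sum r n A k j)) / (\<Prod>k'<r. real (n k') powr (1 / p))))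
      \<longrightarrow> regular r n A)
     \<and>
     ((p \<ge> real r \<and> nonneg_matrix r n A) \<longrightarrow>
       ((\<forall>k<r. spec_pnorm p r n A =
          (\<Sum>j<n k. cmod (slice_sum r n A k j)) / (\<Prod>k'<r. real (n k') powr (1 / p)))
        \<longleftrightarrow> regular r n A))"
proof -
  have "p > 0"
    using p by simp
  then have lower: "\<forall>k<r. spec_pnorm p r n A \<ge>
      (\<Sum>j<n k. cmod (slice_sum r n A k j)) / (\<Prod>k'<r. real (n k') powr (1 / p))"
    using spec_pnorm_ge_sum_norm_slice_sum n_pos by blast
  have "regular r n A"
    if "nonneg_matrix r n A" and "\<forall>k<r. spec_pnorm p r n A =
      (\<Sum>j<n k. cmod (slice_sum r n A k j)) / (\<Prod>k'<r. real (n k') powr (1 / p))"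
    unfolding regular_def using slice_sum_eq_if_spec_pnorm_eq[OF p n_pos _ that(1)] that(2) by blast
  moreover have "\<forall>k<r. spec_pnorm p r n A =
      (\<Sum>j<n k. cmod (slice_sum r n A k j)) / (\<Prod>k'<r. real (n k') powr (1 / p))"
    if "p \<ge> real r" and "nonneg_matrix r n A" and "regular r n A"
    using spec_pnorm_eq_if_regular[OF p that(1) n_pos _ that(2,3)] by blast
  ultimately show ?thesis
    using lower by blast
qed

end
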